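(* Let $(\Omega,\mathcal A)$ be a measurable space and let $K$ be a random compact set in $\mathbb C^n$. Then its rationally convex hull, defined by $\omega\mapsto\mathcal R\text{-hull}\,(K(\omega))$, is a random compact set.
   Context: A random compact set is a measurable map from $\Omega$ to the space $\mathcal K'(\mathbb C^n)$ of non-empty compact subsets of $\mathbb C^n$ with the Hausdorff distance and its Borel $\sigma$-algebra. For compact $L$, $\mathcal R\text{-hull}\,L=\{z\in\mathbb C^n:|r(z)|\le\max_{x\in L}|r(x)| \text{ for all rational functions } r \text{ on } \mathbb C^n \text{ analytic (without singularities) on } L\}$. *)

theory Defs
  imports "HOL-Analysis.Analysis"
begin

definition hausdorff_dist :: "'a::metric_space set \<Rightarrow> 'a set \<Rightarrow> real" where
  "hausdorff_dist S T =
     max (SUP x\<in>S. infdist x T) (SUP y\<in>T. infdist y S)"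

definition nonempty_compacts :: "'a::metric_space set set" where
  "nonempty_compacts = {S. compact S \<and> S \<noteq> {}}"

definition hausdorff_open :: "'a::metric_space set set \<Rightarrow> bool" where
  "hausdorff_open U \<longleftrightarrow> U \<subseteq> nonempty_compacts \<and>
     (\<forall>S\<in>U. \<exists>e>0. \<forall>T\<in>nonempty_compacts. hausdorff_dist S T < e \<longrightarrow> T \<in> U)"

definition hausdorff_borel :: "'a::metric_space set measure" where
  "hausdorff_borel = sigma nonempty_compacts {U. hausdorff_open U}"

definition cpoly :: "(complex ^ 'n \<Rightarrow> complex) \<Rightarrow> bool" where
  "cpoly f \<longleftrightarrow> (\<exists>(A :: ('n \<Rightarrow> nat) set) (c :: ('n \<Rightarrow> nat) \<Rightarrow> complex). finite A \<and>
      f = (\<lambda>z. \<Sum>\<alpha>\<in>A. c \<alpha> * (\<Prod>i\<in>UNIV. (z $ i) ^ (\<alpha> i))))"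

text \<open>Rationally convex hull. A rational function analytic on L is p/q with
  polynomials p, q and q without zeros on L; at z it must be defined (q z \<noteq> 0).\<close>
definition R_hull :: "(complex ^ 'n) set \<Rightarrow> (complex ^ 'n) set" where
  "R_hull L = {z. \<forall>p q. cpoly p \<and> cpoly q \<and> (\<forall>x\<in>L. q x \<noteq> 0) \<longrightarrow>
      q z \<noteq> 0 \<and> norm (p z / q z) \<le> (SUP x\<in>L. norm (p x / q x))}"

end

theory Submission
  imports Defs
begin

(* Taking rational hulls is upper semicontinuous for the Hausdorff metric. If a rational function
   p/q separates z from R_hull L, then uniform continuity of p/q on a neighbourhood of L lets the same
   function separate a whole ball around z from the hulls of all compacts close to L (if q z = 0 one
   uses 1/q instead); a uniform bound on the hulls of nearby compacts and compactness then show that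
   {L. R_hull L \<subseteq> U} is Hausdorff-open for every open U. In a separable space the Hausdorff
   Borel sets are generated by the families {C. C \<subseteq> U} with U open, so the measurability of
   \<omega> \<mapsto> R_hull (K \<omega>) reduces to that of K. *)

lemma bdd_above_infdist_image:
  fixes S T :: "'a::metric_space set"
  assumes "compact S"
  shows "bdd_above ((\<lambda>x. infdist x T) ` S)"
proof -
  have "compact ((\<lambda>x. infdist x T) ` S)"
    by (intro compact_continuous_image continuous_on_infdist continuous_on_id assms)
  then show ?thesis by (simp add: bounded_imp_bdd_above compact_imp_bounded)
qed

lemma SUP_infdist_attained:
  fixes S T :: "'a::metric_space set"
  assumes "compact S" "S \<noteq> {}"
  obtains x where "x \<in> S" "(SUP y\<in>S. infdist y T) = infdist x T"
proof -
  obtain x where x: "x \<in> S" "\<forall>y\<in>S. infdist y T \<le> infdist x T"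
    using continuous_attains_sup[OF assms, of "\<lambda>y. infdist y T"]
      continuous_on_infdist[OF continuous_on_id, of S T] by auto
  have "(SUP y\<in>S. infdist y T) = infdist x T"
    by (intro antisym cSUP_least cSUP_upper[OF x(1) bdd_above_infdist_image[OF assms(1)]])
       (use assms x in auto)
  with x that show ?thesis by blast
qed

lemma hausdorff_dist_le_iff:
  fixes S T :: "'a::metric_space set"
  assumes "S \<in> nonempty_compacts" "T \<in> nonempty_compacts"
  shows "hausdorff_dist S T \<le> e \<longleftrightarrow> (\<forall>x\<in>S. infdist x T \<le> e) \<and> (\<forall>y\<in>T. infdist y S \<le> e)"
  using assms bdd_above_infdist_image[of S T] bdd_above_infdist_image[of T S]
  by (simp add: hausdorff_dist_def nonempty_compacts_def cSUP_le_iff)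

lemma hausdorff_dist_less_iff:
  fixes S T :: "'a::metric_space set"
  assumes "S \<in> nonempty_compacts" "T \<in> nonempty_compacts"
  shows "hausdorff_dist S T < e \<longleftrightarrow> (\<forall>x\<in>S. infdist x T < e) \<and> (\<forall>y\<in>T. infdist y S < e)"
proof -
  have S: "compact S" "S \<noteq> {}" and T: "compact T" "T \<noteq> {}"
    using assms by (auto simp: nonempty_compacts_def)
  obtain x where x: "x \<in> S" "(SUP y\<in>S. infdist y T) = infdist x T"
    using SUP_infdist_attained[OF S] .
  obtain y where y: "y \<in> T" "(SUP x\<in>T. infdist x S) = infdist y S"
    using SUP_infdist_attained[OF T] .
  have "\<forall>x'\<in>S. infdist x' T \<le> infdist x T" "\<forall>y'\<in>T. infdist y' S \<le> infdist y S"
    using x y cSUP_upper[OF _ bdd_above_infdist_image[OF S(1)]]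
      cSUP_upper[OF _ bdd_above_infdist_image[OF T(1)]] by metis+
  with x y show ?thesis
    unfolding hausdorff_dist_def by (auto simp: max_less_iff_conj)
qed

lemma hausdorff_dist_commute: "hausdorff_dist S T = hausdorff_dist T S"
  by (simp add: hausdorff_dist_def max.commute)

lemma hausdorff_dist_self:
  fixes L :: "'a::metric_space set"
  assumes "L \<in> nonempty_compacts"
  shows "hausdorff_dist L L = 0"
proof -
  obtain x where "x \<in> L" using assms by (auto simp: nonempty_compacts_def)
  then have "infdist x L \<le> hausdorff_dist L L"
    using hausdorff_dist_le_iff[OF assms assms] by blast
  then show ?thesis
    using hausdorff_dist_le_iff[OF assms assms, of 0] infdist_nonneg[of x L] by simp
qed

lemma hausdorff_dist_lessE:
  fixes L L' :: "'a::heine_borel set"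
  assumes "L \<in> nonempty_compacts" "L' \<in> nonempty_compacts"
    and "hausdorff_dist L L' < e" "y \<in> L'"
  obtains x where "x \<in> L" "dist y x < e"
proof -
  have "infdist y L < e" using assms hausdorff_dist_less_iff[OF assms(1,2)] by blast
  moreover obtain x where "x \<in> L" "infdist y L = dist y x"
    using infdist_attains_inf[of L y] assms(1) by (auto simp: nonempty_compacts_def compact_imp_closed)
  ultimately show ?thesis using that by simp
qed

lemma infdist_le_infdist_add_hausdorff_dist:
  fixes T U :: "'a::heine_borel set"
  assumes "T \<in> nonempty_compacts" "U \<in> nonempty_compacts"
  shows "infdist x U \<le> infdist x T + hausdorff_dist T U"
proof -
  obtain t where t: "t \<in> T" "infdist x T = dist x t"
    using infdist_attains_inf[of T x] assms by (auto simp: nonempty_compacts_def compact_imp_closed)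
  have "infdist t U \<le> hausdorff_dist T U"
    using hausdorff_dist_le_iff[OF assms] t by blast
  with t infdist_triangle[of x U t] show ?thesis by linarith
qed

lemma hausdorff_dist_triangle:
  fixes S T U :: "'a::heine_borel set"
  assumes "S \<in> nonempty_compacts" "T \<in> nonempty_compacts" "U \<in> nonempty_compacts"
  shows "hausdorff_dist S U \<le> hausdorff_dist S T + hausdorff_dist T U"
  unfolding hausdorff_dist_le_iff[OF assms(1,3)]
proof safe
  fix x assume "x \<in> S"
  then show "infdist x U \<le> hausdorff_dist S T + hausdorff_dist T U"
    using infdist_le_infdist_add_hausdorff_dist[OF assms(2,3), of x]
      hausdorff_dist_le_iff[OF assms(1,2), of "hausdorff_dist S T"] by fastforce
next
  fix y assume "y \<in> U"
  then show "infdist y S \<le> hausdorff_dist S T + hausdorff_dist T U"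
    using infdist_le_infdist_add_hausdorff_dist[OF assms(2,1), of y]
      hausdorff_dist_le_iff[OF assms(2,3), of "hausdorff_dist T U"] hausdorff_dist_commute[of T S]
    by fastforce
qed

definition hausdorff_near :: "'a::metric_space set \<Rightarrow> ('a set \<Rightarrow> bool) \<Rightarrow> bool" where
  "hausdorff_near L P \<longleftrightarrow>
     (\<exists>\<epsilon>>0. \<forall>L'\<in>nonempty_compacts. hausdorff_dist L L' < \<epsilon> \<longrightarrow> P L')"

lemma hausdorff_open_iff_near:
  "hausdorff_open V \<longleftrightarrow> V \<subseteq> nonempty_compacts \<and> (\<forall>S\<in>V. hausdorff_near S (\<lambda>T. T \<in> V))"
  by (simp add: hausdorff_open_def hausdorff_near_def)

lemma hausdorff_near_mono:
  assumes "hausdorff_near L P" "\<And>L'. L' \<in> nonempty_compacts \<Longrightarrow> P L' \<Longrightarrow> Q L'"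
  shows "hausdorff_near L Q"
  using assms unfolding hausdorff_near_def by blast

lemma hausdorff_near_conj:
  assumes "hausdorff_near L P" "hausdorff_near L Q"
  shows "hausdorff_near L (\<lambda>L'. P L' \<and> Q L')"
proof -
  obtain \<epsilon> \<delta> where "\<epsilon> > 0" "\<forall>L'\<in>nonempty_compacts. hausdorff_dist L L' < \<epsilon> \<longrightarrow> P L'"
    and "\<delta> > 0" "\<forall>L'\<in>nonempty_compacts. hausdorff_dist L L' < \<delta> \<longrightarrow> Q L'"
    using assms unfolding hausdorff_near_def by blast
  then show ?thesis
    unfolding hausdorff_near_def by (intro exI[of _ "min \<epsilon> \<delta>"]) auto
qed

lemma hausdorff_near_finite_Ball:
  assumes "finite X" "\<And>x. x \<in> X \<Longrightarrow> hausdorff_near L (P x)"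
  shows "hausdorff_near L (\<lambda>L'. \<forall>x\<in>X. P x L')"
  using assms
proof (induction X rule: finite_induct)
  case empty
  show ?case unfolding hausdorff_near_def by (intro exI[of _ 1]) simp
next
  case (insert x X)
  then show ?case using hausdorff_near_conj[of L "P x"] by simp
qed

lemma hausdorff_near_self:
  assumes "L \<in> nonempty_compacts" "hausdorff_near L P"
  shows "P L"
  using assms hausdorff_dist_self[OF assms(1)] unfolding hausdorff_near_def by force

definition compacts_in :: "'a::metric_space set \<Rightarrow> 'a set set" where
  "compacts_in U = {C \<in> nonempty_compacts. C \<subseteq> U}"

definition upper_vietoris_sets :: "'a::metric_space set set set" where
  "upper_vietoris_sets = {compacts_in U | U. open U}"

lemma upper_vietoris_sets_subset: "upper_vietoris_sets \<subseteq> Pow nonempty_compacts"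
  by (auto simp: upper_vietoris_sets_def compacts_in_def)

lemma compacts_in_open_in_sigma:
  "open U \<Longrightarrow> compacts_in U \<in> sigma_sets nonempty_compacts upper_vietoris_sets"
  by (auto simp: upper_vietoris_sets_def intro: sigma_sets.Basic)

lemma compacts_meeting_closed_in_sigma:
  assumes "closed F"
  shows "{C \<in> nonempty_compacts. C \<inter> F \<noteq> {}} \<in> sigma_sets nonempty_compacts upper_vietoris_sets"
proof -
  have "nonempty_compacts - compacts_in (- F) \<in> sigma_sets nonempty_compacts upper_vietoris_sets"
    using assms by (intro sigma_sets.Compl compacts_in_open_in_sigma) auto
  moreover have "nonempty_compacts - compacts_in (- F) = {C \<in> nonempty_compacts. C \<inter> F \<noteq> {}}"
    by (auto simp: compacts_in_def)
  ultimately show ?thesis by simp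
qed

lemma compacts_meeting_ball_in_sigma:
  "{C \<in> nonempty_compacts. C \<inter> ball x r \<noteq> {}} \<in> sigma_sets nonempty_compacts upper_vietoris_sets"
proof -
  have "ball x r = (\<Union>n. cball x (r - inverse (real (Suc n))))"
  proof (intro equalityI subsetI)
    fix y assume "y \<in> ball x r"
    then obtain n where "inverse (real (Suc n)) < r - dist x y"
      using reals_Archimedean[of "r - dist x y"] by auto
    then have "y \<in> cball x (r - inverse (real (Suc n)))" by simp
    then show "y \<in> (\<Union>n. cball x (r - inverse (real (Suc n))))" by blast
  next
    fix y assume "y \<in> (\<Union>n. cball x (r - inverse (real (Suc n))))"
    then obtain n where "dist x y \<le> r - inverse (real (Suc n))" by auto
    moreover have "inverse (real (Suc n)) > 0" by simp
    ultimately have "dist x y < r" by linarith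
    then show "y \<in> ball x r" by simp
  qed
  then have "{C \<in> nonempty_compacts. C \<inter> ball x r \<noteq> {}} =
      (\<Union>n. {C \<in> nonempty_compacts. C \<inter> cball x (r - inverse (real (Suc n))) \<noteq> {}})"
    by auto
  then show ?thesis
    by (simp add: sigma_sets.Union compacts_meeting_closed_in_sigma)
qed

lemma infdist_less_iff_meets_ball:
  fixes T :: "'a::heine_borel set"
  assumes "T \<in> nonempty_compacts"
  shows "infdist x T < r \<longleftrightarrow> T \<inter> ball x r \<noteq> {}"
proof
  assume "infdist x T < r"
  moreover obtain t where "t \<in> T" "infdist x T = dist x t"
    using infdist_attains_inf[of T x] assms by (auto simp: nonempty_compacts_def compact_imp_closed)
  ultimately show "T \<inter> ball x r \<noteq> {}" by auto
next
  assume "T \<inter> ball x r \<noteq> {}"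
  then obtain t where "t \<in> T" "dist x t < r" by auto
  then show "infdist x T < r" using infdist_le[of t T x] by linarith
qed

lemma hausdorff_ball_finite_in_sigma:
  fixes D :: "'a::heine_borel set"
  assumes "finite D" "D \<noteq> {}"
  shows "{T \<in> nonempty_compacts. hausdorff_dist D T < r} \<in> sigma_sets nonempty_compacts upper_vietoris_sets"
proof -
  interpret sigma_algebra nonempty_compacts "sigma_sets nonempty_compacts upper_vietoris_sets"
    by (rule sigma_algebra_sigma_sets[OF upper_vietoris_sets_subset])
  have D: "D \<in> nonempty_compacts"
    using assms by (auto simp: nonempty_compacts_def finite_imp_compact)
  have "open {y. infdist y D < r}"
    by (intro open_Collect_less continuous_intros)
  then have "compacts_in {y. infdist y D < r} \<in> sigma_sets nonempty_compacts upper_vietoris_sets"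
    by (rule compacts_in_open_in_sigma)
  moreover have "(\<Inter>x\<in>D. {C \<in> nonempty_compacts. C \<inter> ball x r \<noteq> {}})
      \<in> sigma_sets nonempty_compacts upper_vietoris_sets"
    using assms compacts_meeting_ball_in_sigma by (intro finite_INT) auto
  moreover have "{T \<in> nonempty_compacts. hausdorff_dist D T < r} =
      compacts_in {y. infdist y D < r} \<inter> (\<Inter>x\<in>D. {C \<in> nonempty_compacts. C \<inter> ball x r \<noteq> {}})"
    using D by (auto simp: hausdorff_dist_less_iff compacts_in_def infdist_less_iff_meets_ball)
  ultimately show ?thesis by (simp add: Int)
qed

lemma finite_subset_hausdorff_approx:
  fixes S :: "'a::metric_space set"
  assumes S: "S \<in> nonempty_compacts" and "e > 0"
    and dense: "\<And>X. open X \<Longrightarrow> X \<noteq> {} \<Longrightarrow> \<exists>d\<in>A. d \<in> X"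
  obtains D where "finite D" "D \<noteq> {}" "D \<subseteq> A" "hausdorff_dist S D < e"
proof -
  have "S \<subseteq> (\<Union>x\<in>S. ball x (e/2))" using \<open>e > 0\<close> by auto
  then obtain X where X: "X \<subseteq> S" "finite X" "S \<subseteq> (\<Union>x\<in>X. ball x (e/2))"
    using compactE_image[of S S "\<lambda>x. ball x (e/2)"] S by (auto simp: nonempty_compacts_def)
  have "\<forall>x\<in>X. \<exists>d\<in>A. d \<in> ball x (e/2)"
    using dense \<open>e > 0\<close> by (metis centre_in_ball empty_iff half_gt_zero open_ball)
  then obtain d where d: "\<forall>x\<in>X. d x \<in> A \<and> dist x (d x) < e/2" by (metis mem_ball)
  have X_ne: "X \<noteq> {}" using X S by (auto simp: nonempty_compacts_def)
  have D: "d ` X \<in> nonempty_compacts"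
    using X X_ne by (auto simp: nonempty_compacts_def finite_imp_compact)
  have "hausdorff_dist S (d ` X) < e"
    unfolding hausdorff_dist_less_iff[OF S D]
  proof safe
    fix s assume "s \<in> S"
    then obtain x where x: "x \<in> X" "dist x s < e/2" using X by auto
    then have "dist s (d x) < e" using d dist_triangle[of s "d x" x] by (auto simp: dist_commute)
    then show "infdist s (d ` X) < e" using infdist_le[of "d x" "d ` X" s] x by fastforce
  next
    fix x assume "x \<in> X"
    then have "dist (d x) x < e" using d \<open>e > 0\<close> by (auto simp: dist_commute)
    then show "infdist (d x) S < e" using infdist_le[of x S "d x"] \<open>x \<in> X\<close> X by force
  qed
  with X X_ne d that show ?thesis by blast
qed

lemma hausdorff_open_finite_ball_subset:
  fixes V :: "'a::heine_borel set set"
  assumes V: "hausdorff_open V" and "S \<in> V"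
    and dense: "\<And>X. open X \<Longrightarrow> X \<noteq> {} \<Longrightarrow> \<exists>d\<in>A. d \<in> X"
  obtains D r where "finite D" "D \<noteq> {}" "D \<subseteq> A" "r \<in> \<rat>" "hausdorff_dist D S < r"
    "{T \<in> nonempty_compacts. hausdorff_dist D T < r} \<subseteq> V"
proof -
  have S: "S \<in> nonempty_compacts" using V \<open>S \<in> V\<close> by (auto simp: hausdorff_open_def)
  obtain e where "e > 0" and e: "\<forall>T\<in>nonempty_compacts. hausdorff_dist S T < e \<longrightarrow> T \<in> V"
    using V \<open>S \<in> V\<close> by (auto simp: hausdorff_open_def)
  obtain D where D: "finite D" "D \<noteq> {}" "D \<subseteq> A" "hausdorff_dist S D < e/3"
    using finite_subset_hausdorff_approx[OF S _ dense, of "e/3"] \<open>e > 0\<close> by auto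
  then have D_nc: "D \<in> nonempty_compacts" by (auto simp: nonempty_compacts_def finite_imp_compact)
  obtain r where r: "r \<in> \<rat>" "e/3 < r" "r < 2*e/3"
    using Rats_dense_in_real[of "e/3" "2*e/3"] \<open>e > 0\<close> by auto
  have "T \<in> V" if T: "T \<in> nonempty_compacts" "hausdorff_dist D T < r" for T
  proof -
    have "hausdorff_dist S T < e"
      using hausdorff_dist_triangle[OF S D_nc T(1)] D(4) T(2) r by linarith
    with e T show ?thesis by blast
  qed
  then have "{T \<in> nonempty_compacts. hausdorff_dist D T < r} \<subseteq> V" by blast
  moreover have "hausdorff_dist D S < r" using D(4) r hausdorff_dist_commute[of D S] by simp
  ultimately show thesis using that[OF D(1-3) r(1)] by blast
qed

lemma hausdorff_open_in_upper_vietoris_sigma: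
  fixes V :: "'a::{heine_borel, second_countable_topology} set set"
  assumes "hausdorff_open V"
  shows "V \<in> sigma_sets nonempty_compacts upper_vietoris_sets"
proof -
  obtain A :: "'a set" where A: "countable A" "\<And>X. open X \<Longrightarrow> X \<noteq> {} \<Longrightarrow> \<exists>d\<in>A. d \<in> X"
    by (rule countable_dense_setE) blast
  define ball_H where "ball_H = (\<lambda>(D::'a set, r::real). {T \<in> nonempty_compacts. hausdorff_dist D T < r})"
  define I where "I = {(D, r). finite D \<and> D \<subseteq> A \<and> D \<noteq> {} \<and> r \<in> \<rat> \<and> ball_H (D, r) \<subseteq> V}"
  have "countable I"
  proof (rule countable_subset)
    show "I \<subseteq> {D. finite D \<and> D \<subseteq> A} \<times> \<rat>" by (auto simp: I_def)
    show "countable ({D. finite D \<and> D \<subseteq> A} \<times> \<rat>)"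
      using countable_Collect_finite_subset[OF A(1)] countable_rat by blast
  qed
  have "V \<subseteq> (\<Union>i\<in>I. ball_H i)"
  proof
    fix S assume "S \<in> V"
    then have "S \<in> nonempty_compacts" using assms by (auto simp: hausdorff_open_def)
    obtain D r where "finite D" "D \<noteq> {}" "D \<subseteq> A" "r \<in> \<rat>" "hausdorff_dist D S < r"
      "{T \<in> nonempty_compacts. hausdorff_dist D T < r} \<subseteq> V"
      using hausdorff_open_finite_ball_subset[OF assms \<open>S \<in> V\<close> A(2)] .
    with \<open>S \<in> nonempty_compacts\<close> show "S \<in> (\<Union>i\<in>I. ball_H i)"
      by (auto simp: I_def ball_H_def)
  qed
  then have "V = (\<Union>i\<in>I. ball_H i)" by (auto simp: I_def)
  moreover have "ball_H ` I \<subseteq> sigma_sets nonempty_compacts upper_vietoris_sets"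
    by (auto simp: I_def ball_H_def intro: hausdorff_ball_finite_in_sigma)
  ultimately show ?thesis
    using sigma_algebra.countable_UN'[OF sigma_algebra_sigma_sets[OF upper_vietoris_sets_subset]
        \<open>countable I\<close>] by simp
qed

lemma measurable_hausdorff_borelI:
  fixes f :: "'b \<Rightarrow> 'a::{heine_borel, second_countable_topology} set"
  assumes f: "f \<in> space M \<rightarrow> nonempty_compacts"
    and pre: "\<And>U. open U \<Longrightarrow> f -` compacts_in U \<inter> space M \<in> sets M"
  shows "f \<in> measurable M hausdorff_borel"
proof -
  have opens: "{U. hausdorff_open U} \<subseteq> Pow (nonempty_compacts :: 'a set set)"
    by (auto simp: hausdorff_open_def)
  have "f \<in> measurable M (sigma nonempty_compacts upper_vietoris_sets)"
    using pre by (intro measurable_measure_of[OF upper_vietoris_sets_subset f])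
      (auto simp: upper_vietoris_sets_def)
  then show ?thesis
    unfolding hausdorff_borel_def
    by (intro measurable_measure_of[OF opens f] measurable_sets)
      (auto simp: sets_measure_of[OF upper_vietoris_sets_subset] hausdorff_open_in_upper_vietoris_sigma)
qed

lemma hausdorff_open_in_hausdorff_borel:
  "hausdorff_open V \<Longrightarrow> V \<in> sets hausdorff_borel"
  unfolding hausdorff_borel_def
  by (subst sets_measure_of) (auto simp: hausdorff_open_def intro: sigma_sets.Basic)

lemma space_hausdorff_borel: "space hausdorff_borel = nonempty_compacts"
  unfolding hausdorff_borel_def by (subst space_measure_of) (auto simp: hausdorff_open_def)

lemma cpoly_continuous_on: "cpoly f \<Longrightarrow> continuous_on S f"
  unfolding cpoly_def by (auto intro!: continuous_intros)

lemma cpoly_const: "cpoly (\<lambda>z::complex ^ 'n. c)"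
  unfolding cpoly_def by (intro exI[of _ "{\<lambda>_. 0}"] exI[of _ "\<lambda>_. c"]) simp

lemma cpoly_component: "cpoly (\<lambda>z::complex ^ 'n. z $ i)"
proof -
  have "(\<Prod>j\<in>UNIV. (z $ j) ^ (if j = i then 1 else 0)) = z $ i" for z :: "complex ^ 'n"
    by (simp add: if_distrib prod.delta cong: if_cong)
  then show ?thesis
    unfolding cpoly_def by (intro exI[of _ "{\<lambda>j. if j = i then 1 else 0}"] exI[of _ "\<lambda>_. 1"]) auto
qed

lemma bdd_above_norm_image_compact:
  fixes g :: "'a::metric_space \<Rightarrow> 'b::real_normed_vector"
  assumes "compact L" "continuous_on L g"
  shows "bdd_above ((\<lambda>x. norm (g x)) ` L)"
  using compact_imp_bounded[OF compact_continuous_image[OF continuous_on_norm[OF assms(2)] assms(1)]]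
  by (rule bounded_imp_bdd_above)

lemma subset_R_hull:
  fixes L :: "(complex ^ 'n) set"
  assumes "compact L"
  shows "L \<subseteq> R_hull L"
proof
  fix x assume "x \<in> L"
  have "norm (p x / q x) \<le> (SUP x\<in>L. norm (p x / q x))"
    if "cpoly p" "cpoly q" "\<forall>x\<in>L. q x \<noteq> 0" for p q :: "complex ^ 'n \<Rightarrow> complex"
    using that \<open>x \<in> L\<close> assms
    by (intro cSUP_upper bdd_above_norm_image_compact continuous_on_divide cpoly_continuous_on)
  with \<open>x \<in> L\<close> show "x \<in> R_hull L"
    unfolding R_hull_def by blast
qed

lemma infdist_neighbourhood_disjoint:
  fixes L Z :: "'a::heine_borel set"
  assumes "compact L" "L \<noteq> {}" "closed Z" "L \<inter> Z = {}"
  obtains d where "d > 0" "\<And>y. infdist y L \<le> d \<Longrightarrow> y \<notin> Z"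
proof -
  obtain \<delta> where "\<delta> > 0" and \<delta>: "\<forall>x\<in>L. \<forall>y\<in>Z. \<delta> \<le> dist x y"
    using separate_compact_closed[OF assms(1,3,4)] by blast
  have "y \<notin> Z" if "infdist y L \<le> \<delta>/2" for y
  proof
    assume "y \<in> Z"
    obtain x where "x \<in> L" "infdist y L = dist y x"
      using infdist_attains_inf[of L y] assms(1,2) compact_imp_closed by blast
    with \<delta> \<open>y \<in> Z\<close> that \<open>\<delta> > 0\<close> show False by (fastforce simp: dist_commute)
  qed
  with \<open>\<delta> > 0\<close> that show ?thesis by (metis half_gt_zero)
qed

lemma hausdorff_near_SUP_norm_le:
  fixes g :: "'a::heine_borel \<Rightarrow> 'b::real_normed_vector"
  assumes L: "L \<in> nonempty_compacts" and "d > 0" "\<eta> > 0"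
    and g: "continuous_on {y. infdist y L \<le> d} g"
  shows "hausdorff_near L (\<lambda>L'. L' \<subseteq> {y. infdist y L \<le> d} \<and>
           (SUP x\<in>L'. norm (g x)) \<le> (SUP x\<in>L. norm (g x)) + \<eta>)"
proof -
  define N where "N = {y. infdist y L \<le> d}"
  have cL: "compact L" "L \<noteq> {}" using L by (auto simp: nonempty_compacts_def)
  have "compact N" unfolding N_def using compact_infdist_le[OF cL(2,1) \<open>d > 0\<close>] .
  have "L \<subseteq> N" using \<open>d > 0\<close> by (auto simp: N_def)
  have cont_L: "continuous_on L g" and "uniformly_continuous_on N g"
    using g \<open>L \<subseteq> N\<close> \<open>compact N\<close> unfolding N_def[symmetric]
    by (auto intro: continuous_on_subset compact_uniformly_continuous)
  then obtain \<delta> where "\<delta> > 0" and \<delta>: "\<forall>x\<in>N. \<forall>x'\<in>N. dist x' x < \<delta> \<longrightarrow> dist (g x') (g x) < \<eta>"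
    using \<open>\<eta> > 0\<close> unfolding uniformly_continuous_on_def by metis
  have close: "\<exists>x\<in>L. dist y x < \<delta> \<and> y \<in> N"
    if near: "L' \<in> nonempty_compacts" "hausdorff_dist L L' < min \<delta> d" "y \<in> L'" for L' y
  proof -
    obtain x where "x \<in> L" "dist y x < min \<delta> d"
      using hausdorff_dist_lessE[OF L near] .
    moreover have "infdist y L \<le> dist y x" using \<open>x \<in> L\<close> by (rule infdist_le)
    ultimately show ?thesis by (auto simp: N_def)
  qed
  show ?thesis
    unfolding hausdorff_near_def N_def[symmetric]
  proof (intro exI[of _ "min \<delta> d"] conjI ballI impI subsetI)
    show "min \<delta> d > 0" using \<open>\<delta> > 0\<close> \<open>d > 0\<close> by simp
  next
    fix L' y assume "L' \<in> nonempty_compacts" "hausdorff_dist L L' < min \<delta> d" "y \<in> L'"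
    then show "y \<in> N" using close by blast
  next
    fix L' assume L': "L' \<in> nonempty_compacts" "hausdorff_dist L L' < min \<delta> d"
    then have "L' \<noteq> {}" by (auto simp: nonempty_compacts_def)
    then show "(SUP x\<in>L'. norm (g x)) \<le> (SUP x\<in>L. norm (g x)) + \<eta>"
    proof (rule cSUP_least)
      fix y assume "y \<in> L'"
      then obtain x where x: "x \<in> L" "dist y x < \<delta>" "y \<in> N" using close[OF L'] by blast
      have "dist (g y) (g x) < \<eta>" using \<delta> x \<open>L \<subseteq> N\<close> by blast
      moreover have "norm (g x) \<le> (SUP x\<in>L. norm (g x))"
        by (intro cSUP_upper x bdd_above_norm_image_compact cL cont_L)
      moreover have "norm (g y) \<le> norm (g x) + dist (g y) (g x)"
        by (metis add.commute dist_commute dist_norm norm_triangle_sub)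
      ultimately show "norm (g y) \<le> (SUP x\<in>L. norm (g x)) + \<eta>" by linarith
    qed
  qed
qed

lemma hausdorff_near_SUP_quotient_le:
  fixes L :: "(complex ^ 'n) set"
  assumes L: "L \<in> nonempty_compacts" and p: "cpoly p" and q: "cpoly q"
    and q_L: "\<forall>x\<in>L. q x \<noteq> 0" and "\<eta> > 0"
  shows "hausdorff_near L (\<lambda>L'. (\<forall>x\<in>L'. q x \<noteq> 0) \<and>
           (SUP x\<in>L'. norm (p x / q x)) \<le> (SUP x\<in>L. norm (p x / q x)) + \<eta>)"
proof -
  have cL: "compact L" "L \<noteq> {}" using L by (auto simp: nonempty_compacts_def)
  have "closed {x. q x = 0}"
    using q by (intro closed_Collect_eq cpoly_continuous_on continuous_on_const)
  moreover have "L \<inter> {x. q x = 0} = {}" using q_L by blast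
  ultimately obtain d where "d > 0" and d: "\<And>y. infdist y L \<le> d \<Longrightarrow> y \<notin> {x. q x = 0}"
    using infdist_neighbourhood_disjoint[OF cL] by metis
  have "continuous_on {y. infdist y L \<le> d} (\<lambda>x. p x / q x)"
    using p q d by (intro continuous_on_divide cpoly_continuous_on) auto
  from hausdorff_near_SUP_norm_le[OF L \<open>d > 0\<close> \<open>\<eta> > 0\<close> this]
  show ?thesis by (rule hausdorff_near_mono) (use d in blast)
qed

lemma R_hull_disjoint_ball:
  assumes "cpoly p" "cpoly q" "\<forall>x\<in>L'. q x \<noteq> 0"
    and "(SUP x\<in>L'. norm (p x / q x)) \<le> c"
    and "\<forall>z'\<in>ball z \<delta>. q z' = 0 \<or> c < norm (p z' / q z')"
  shows "ball z \<delta> \<inter> R_hull L' = {}"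
  using assms unfolding R_hull_def by force

lemma cpoly_isCont: "cpoly f \<Longrightarrow> isCont f z"
  using cpoly_continuous_on[of f UNIV] continuous_on_eq_continuous_at open_UNIV by blast

lemma inverse_quotient_separates_ball:
  fixes L :: "(complex ^ 'n) set"
  assumes L: "L \<in> nonempty_compacts" and q: "cpoly q" "\<forall>x\<in>L. q x \<noteq> 0" and "q z = 0"
  obtains c \<delta> where "\<delta> > 0" "\<forall>z'\<in>ball z \<delta>. q z' = 0 \<or> c < norm (1 / q z')"
    "hausdorff_near L (\<lambda>L'. (\<forall>x\<in>L'. q x \<noteq> 0) \<and> (SUP x\<in>L'. norm (1 / q x)) \<le> c)"
proof -
  define c where "c = (SUP x\<in>L. norm (1 / q x)) + 1"
  have near: "hausdorff_near L (\<lambda>L'. (\<forall>x\<in>L'. q x \<noteq> 0) \<and> (SUP x\<in>L'. norm (1 / q x)) \<le> c)"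
    unfolding c_def using hausdorff_near_SUP_quotient_le[OF L cpoly_const q] by simp
  define t where "t = \<bar>c\<bar> + 1"
  have "t > 0" "c < t" by (auto simp: t_def)
  obtain \<delta> where "\<delta> > 0" and \<delta>: "\<forall>z'. dist z' z < \<delta> \<longrightarrow> dist (q z') (q z) < 1 / t"
    using cpoly_isCont[OF q(1)] \<open>t > 0\<close> unfolding continuous_at_eps_delta
    by (metis divide_pos_pos zero_less_one)
  have "c < norm (1 / q z')" if "z' \<in> ball z \<delta>" "q z' \<noteq> 0" for z'
  proof -
    have "dist z' z < \<delta>" using that(1) by (simp add: dist_commute)
    then have "norm (q z') * t < 1"
      using \<delta> \<open>q z = 0\<close> \<open>t > 0\<close> by (simp add: dist_norm pos_less_divide_eq)
    then have "t < 1 / norm (q z')"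
      using that(2) by (simp add: pos_less_divide_eq mult.commute)
    then show ?thesis using \<open>c < t\<close> by (simp add: norm_divide)
  qed
  then have "\<forall>z'\<in>ball z \<delta>. q z' = 0 \<or> c < norm (1 / q z')" by blast
  with near \<open>\<delta> > 0\<close> that show thesis by blast
qed

lemma quotient_separates_ball:
  fixes L :: "(complex ^ 'n) set"
  assumes L: "L \<in> nonempty_compacts" and pq: "cpoly p" "cpoly q" "\<forall>x\<in>L. q x \<noteq> 0"
    and "q z \<noteq> 0" and z: "(SUP x\<in>L. norm (p x / q x)) < norm (p z / q z)"
  obtains c \<delta> where "\<delta> > 0" "\<forall>z'\<in>ball z \<delta>. c < norm (p z' / q z')"
    "hausdorff_near L (\<lambda>L'. (\<forall>x\<in>L'. q x \<noteq> 0) \<and> (SUP x\<in>L'. norm (p x / q x)) \<le> c)"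
proof -
  define s where "s = (SUP x\<in>L. norm (p x / q x))"
  define \<eta> where "\<eta> = (norm (p z / q z) - s) / 2"
  have "\<eta> > 0" using z by (simp add: \<eta>_def s_def)
  have near: "hausdorff_near L (\<lambda>L'. (\<forall>x\<in>L'. q x \<noteq> 0) \<and> (SUP x\<in>L'. norm (p x / q x)) \<le> s + \<eta>)"
    unfolding s_def using hausdorff_near_SUP_quotient_le[OF L pq \<open>\<eta> > 0\<close>] .
  obtain \<delta> where "\<delta> > 0" and \<delta>: "\<forall>z'. dist z' z < \<delta> \<longrightarrow> dist (p z' / q z') (p z / q z) < \<eta>"
    using isCont_divide[OF cpoly_isCont[OF pq(1)] cpoly_isCont[OF pq(2)] \<open>q z \<noteq> 0\<close>] \<open>\<eta> > 0\<close>
    unfolding continuous_at_eps_delta by metis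
  have "s + \<eta> < norm (p z' / q z')" if "z' \<in> ball z \<delta>" for z'
  proof -
    have "dist z' z < \<delta>" using that by (simp add: dist_commute)
    then have "dist (p z' / q z') (p z / q z) < \<eta>" using \<delta> by blast
    moreover have "norm (p z / q z) \<le> norm (p z' / q z') + dist (p z' / q z') (p z / q z)"
      by (metis dist_commute dist_norm norm_triangle_sub)
    moreover have "2 * \<eta> = norm (p z / q z) - s" by (simp add: \<eta>_def)
    ultimately show ?thesis by linarith
  qed
  with near \<open>\<delta> > 0\<close> that show thesis by blast
qed

lemma not_in_R_hull_near:
  fixes L :: "(complex ^ 'n) set"
  assumes L: "L \<in> nonempty_compacts" and "z \<notin> R_hull L"
  obtains \<delta> where "\<delta> > 0" "hausdorff_near L (\<lambda>L'. ball z \<delta> \<inter> R_hull L' = {})"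
proof -
  obtain p q where pq: "cpoly p" "cpoly q" "\<forall>x\<in>L. q x \<noteq> 0"
    and z: "q z = 0 \<or> (SUP x\<in>L. norm (p x / q x)) < norm (p z / q z)"
    using assms unfolding R_hull_def by (auto simp: not_le)
  show thesis
  proof (cases "q z = 0")
    case True
    obtain c \<delta> where "\<delta> > 0" and ball: "\<forall>z'\<in>ball z \<delta>. q z' = 0 \<or> c < norm (1 / q z')"
      and near: "hausdorff_near L (\<lambda>L'. (\<forall>x\<in>L'. q x \<noteq> 0) \<and> (SUP x\<in>L'. norm (1 / q x)) \<le> c)"
      using inverse_quotient_separates_ball[OF L pq(2,3) True] .
    have "hausdorff_near L (\<lambda>L'. ball z \<delta> \<inter> R_hull L' = {})"
      using near by (rule hausdorff_near_mono)
        (use R_hull_disjoint_ball[OF cpoly_const pq(2) _ _ ball] in blast)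
    with \<open>\<delta> > 0\<close> that show thesis by blast
  next
    case False
    obtain c \<delta> where "\<delta> > 0" and ball: "\<forall>z'\<in>ball z \<delta>. c < norm (p z' / q z')"
      and near: "hausdorff_near L (\<lambda>L'. (\<forall>x\<in>L'. q x \<noteq> 0) \<and> (SUP x\<in>L'. norm (p x / q x)) \<le> c)"
      using quotient_separates_ball[OF L pq False] z False by blast
    have "hausdorff_near L (\<lambda>L'. ball z \<delta> \<inter> R_hull L' = {})"
      using near by (rule hausdorff_near_mono) (use R_hull_disjoint_ball[OF pq(1,2)] ball in blast)
    with \<open>\<delta> > 0\<close> that show thesis by blast
  qed
qed

lemma R_hull_norm_le:
  assumes "z \<in> R_hull L" "cpoly p" "cpoly q" "\<forall>x\<in>L. q x \<noteq> 0"
  shows "norm (p z / q z) \<le> (SUP x\<in>L. norm (p x / q x))"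
  using assms unfolding R_hull_def by blast

lemma R_hull_bounded_near:
  fixes L :: "(complex ^ 'n) set"
  assumes L: "L \<in> nonempty_compacts"
  obtains R where "hausdorff_near L (\<lambda>L'. R_hull L' \<subseteq> cball 0 R)"
proof -
  define b where "b i = (SUP x\<in>L. norm (x $ i)) + 1" for i
  have "hausdorff_near L (\<lambda>L'. (SUP x\<in>L'. norm (x $ i)) \<le> b i)" for i
  proof -
    have "hausdorff_near L (\<lambda>L'. (\<forall>x\<in>L'. (1::complex) \<noteq> 0) \<and>
        (SUP x\<in>L'. norm (x $ i / 1)) \<le> (SUP x\<in>L. norm (x $ i / 1)) + 1)"
      by (rule hausdorff_near_SUP_quotient_le[OF L cpoly_component cpoly_const]) auto
    then show ?thesis by (rule hausdorff_near_mono) (simp add: b_def)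
  qed
  then have near: "hausdorff_near L (\<lambda>L'. \<forall>i\<in>UNIV. (SUP x\<in>L'. norm (x $ i)) \<le> b i)"
    by (intro hausdorff_near_finite_Ball) auto
  have bound: "R_hull L' \<subseteq> cball 0 (\<Sum>i\<in>UNIV. b i)"
    if b: "\<forall>i\<in>UNIV. (SUP x\<in>L'. norm (x $ i)) \<le> b i" for L'
  proof
    fix z assume z: "z \<in> R_hull L'"
    have "norm (z $ i) \<le> b i" for i
      using R_hull_norm_le[OF z cpoly_component[of i] cpoly_const[of 1]] b by (simp add: order_trans)
    then have "norm z \<le> (\<Sum>i\<in>UNIV. b i)"
      using L2_set_le_sum[of UNIV "\<lambda>i. norm (z $ i)"] sum_mono[of UNIV "\<lambda>i. norm (z $ i)" b]
      by (simp add: norm_vec_def)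
    then show "z \<in> cball 0 (\<Sum>i\<in>UNIV. b i)" by simp
  qed
  have "hausdorff_near L (\<lambda>L'. R_hull L' \<subseteq> cball 0 (\<Sum>i\<in>UNIV. b i))"
    using near by (rule hausdorff_near_mono) (rule bound)
  then show thesis by (rule that)
qed

lemma R_hull_subset_near:
  fixes L :: "(complex ^ 'n) set"
  assumes L: "L \<in> nonempty_compacts" and "open U" "R_hull L \<subseteq> U"
  shows "hausdorff_near L (\<lambda>L'. R_hull L' \<subseteq> U)"
proof -
  obtain R where R: "hausdorff_near L (\<lambda>L'. R_hull L' \<subseteq> cball 0 R)"
    using R_hull_bounded_near[OF L] .
  define Q where "Q = cball 0 R - U"
  have "compact Q" unfolding Q_def using \<open>open U\<close> by (intro compact_diff) auto
  have "\<exists>\<delta>>0. hausdorff_near L (\<lambda>L'. ball z \<delta> \<inter> R_hull L' = {})" if "z \<in> Q" for z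
  proof -
    have "z \<notin> R_hull L" using that assms(3) by (auto simp: Q_def)
    then show ?thesis using not_in_R_hull_near[OF L] by metis
  qed
  then obtain \<delta> where \<delta>: "\<And>z. z \<in> Q \<Longrightarrow> \<delta> z > 0"
    and near: "\<And>z. z \<in> Q \<Longrightarrow> hausdorff_near L (\<lambda>L'. ball z (\<delta> z) \<inter> R_hull L' = {})"
    by metis
  have "Q \<subseteq> (\<Union>z\<in>Q. ball z (\<delta> z))" using \<delta> by auto
  then obtain X where X: "X \<subseteq> Q" "finite X" "Q \<subseteq> (\<Union>z\<in>X. ball z (\<delta> z))"
    using compactE_image[OF \<open>compact Q\<close>, of Q "\<lambda>z. ball z (\<delta> z)"] by auto
  have "hausdorff_near L (\<lambda>L'. \<forall>z\<in>X. ball z (\<delta> z) \<inter> R_hull L' = {})"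
    using X(1,2) near by (intro hausdorff_near_finite_Ball) auto
  with R have "hausdorff_near L
      (\<lambda>L'. R_hull L' \<subseteq> cball 0 R \<and> (\<forall>z\<in>X. ball z (\<delta> z) \<inter> R_hull L' = {}))"
    by (rule hausdorff_near_conj)
  moreover have "R_hull L' \<subseteq> U"
    if "R_hull L' \<subseteq> cball 0 R \<and> (\<forall>z\<in>X. ball z (\<delta> z) \<inter> R_hull L' = {})" for L'
    using that X(3) unfolding Q_def by blast
  ultimately show ?thesis
    by (rule hausdorff_near_mono)
qed

lemma R_hull_in_nonempty_compacts:
  fixes L :: "(complex ^ 'n) set"
  assumes L: "L \<in> nonempty_compacts"
  shows "R_hull L \<in> nonempty_compacts"
proof -
  have "compact L" "L \<noteq> {}" using L by (auto simp: nonempty_compacts_def)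
  then have "R_hull L \<noteq> {}" using subset_R_hull by blast
  moreover obtain R where "hausdorff_near L (\<lambda>L'. R_hull L' \<subseteq> cball 0 R)"
    using R_hull_bounded_near[OF L] .
  then have "R_hull L \<subseteq> cball 0 R" by (rule hausdorff_near_self[OF L])
  then have "bounded (R_hull L)" using bounded_cball bounded_subset by blast
  moreover have "open (- R_hull L)"
    unfolding open_contains_ball
  proof
    fix z assume "z \<in> - R_hull L"
    then obtain \<delta> where "\<delta> > 0" and near: "hausdorff_near L (\<lambda>L'. ball z \<delta> \<inter> R_hull L' = {})"
      using not_in_R_hull_near[OF L] by auto
    have "ball z \<delta> \<inter> R_hull L = {}" using hausdorff_near_self[OF L near] .
    with \<open>\<delta> > 0\<close> show "\<exists>\<delta>>0. ball z \<delta> \<subseteq> - R_hull L" by blast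
  qed
  ultimately show ?thesis
    by (simp add: nonempty_compacts_def compact_eq_bounded_closed closed_def)
qed

lemma hausdorff_open_R_hull_subset:
  fixes U :: "(complex ^ 'n) set"
  assumes "open U"
  shows "hausdorff_open {L \<in> nonempty_compacts. R_hull L \<subseteq> U}"
  unfolding hausdorff_open_iff_near
  using assms by (auto intro: hausdorff_near_mono[OF R_hull_subset_near])

theorem theorem6p19:
  fixes M :: "'b measure" and K :: "'b \<Rightarrow> (complex ^ 'n) set"
  assumes "K \<in> measurable M hausdorff_borel"
  shows "(\<lambda>\<omega>. R_hull (K \<omega>)) \<in> measurable M hausdorff_borel"
proof (rule measurable_hausdorff_borelI)
  have K: "K \<omega> \<in> nonempty_compacts" if "\<omega> \<in> space M" for \<omega>
    using measurable_space[OF assms that] by (simp add: space_hausdorff_borel)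
  then show "(\<lambda>\<omega>. R_hull (K \<omega>)) \<in> space M \<rightarrow> nonempty_compacts"
    using R_hull_in_nonempty_compacts by blast
  fix U :: "(complex ^ 'n) set" assume "open U"
  then have "K -` {L \<in> nonempty_compacts. R_hull L \<subseteq> U} \<inter> space M \<in> sets M"
    by (intro measurable_sets[OF assms] hausdorff_open_in_hausdorff_borel
        hausdorff_open_R_hull_subset)
  moreover have "(\<lambda>\<omega>. R_hull (K \<omega>)) -` compacts_in U \<inter> space M
      = K -` {L \<in> nonempty_compacts. R_hull L \<subseteq> U} \<inter> space M"
    using K R_hull_in_nonempty_compacts by (auto simp: compacts_in_def)
  ultimately show "(\<lambda>\<omega>. R_hull (K \<omega>)) -` compacts_in U \<inter> space M \<in> sets M"
    by simp
qed

end
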